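(* Let $0<\varepsilon<1$, let $d \geq 14/\varepsilon$, and let $S \subseteq I_3^d$ be an $\varepsilon$-sparse set with $|S| \leq 2^{\varepsilon d/4}$. Then there exists a $d$-dimensional polystochastic matrix $A$ of order $3$ such that $\mathrm{supp}(A) = I_3^d \setminus S$.
   Context: $I_3^d = \{1,2,3\}^d$. A $d$-dimensional matrix of order $3$ is an array $A = (a_\alpha)_{\alpha \in I_3^d}$ of reals; a line is the set of entries obtained by fixing all but one coordinate of the index; $A$ is polystochastic if all entries are nonnegative and each line sums to $1$. $\mathrm{supp}(A) = \{\alpha : a_\alpha \neq 0\}$. For $\alpha,\beta \in I_3^d$, $\rho(\alpha,\beta)$ is the Hamming distance. For $\alpha \in I_3^d$ let $T_\alpha = \{\beta \in I_3^d : \rho(\alpha,\beta) = d\}$. For $0<\varepsilon<1$, a set $S \subseteq I_3^d$ is $\varepsilon$-sparse if (1) $\rho(\alpha,\beta) \geq \varepsilon d$ for all distinct $\alpha,\beta \in S$, and (2) for every $\alpha \in S$ there is $\gamma_\alpha \in I_3^d$ with $T_{\gamma_\alpha} \cap S = \{\alpha\}$. *)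

theory Defs
  imports "HOL-Analysis.Analysis"
begin

definition I3 :: "nat \<Rightarrow> (nat \<Rightarrow> nat) set" where
  "I3 d = {\<alpha>. (\<forall>i<d. \<alpha> i \<in> {1,2,3}) \<and> (\<forall>i\<ge>d. \<alpha> i = 0)}"

definition hamming :: "nat \<Rightarrow> (nat \<Rightarrow> nat) \<Rightarrow> (nat \<Rightarrow> nat) \<Rightarrow> nat" where
  "hamming d \<alpha> \<beta> = card {i. i < d \<and> \<alpha> i \<noteq> \<beta> i}"

text \<open>A d-dimensional matrix of order 3 is a real function on I3 d. A line through
  alpha in direction i consists of the entries alpha(i:=k), k in {1,2,3}.\<close>

definition polystochastic :: "nat \<Rightarrow> ((nat \<Rightarrow> nat) \<Rightarrow> real) \<Rightarrow> bool" where
  "polystochastic d A \<longleftrightarrow>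
     (\<forall>\<alpha>\<in>I3 d. A \<alpha> \<ge> 0) \<and>
     (\<forall>\<alpha>\<in>I3 d. \<forall>i<d. (\<Sum>k\<in>{1,2,3::nat}. A (\<alpha>(i := k))) = 1)"

definition supp :: "nat \<Rightarrow> ((nat \<Rightarrow> nat) \<Rightarrow> real) \<Rightarrow> (nat \<Rightarrow> nat) set" where
  "supp d A = {\<alpha>\<in>I3 d. A \<alpha> \<noteq> 0}"

definition T_set :: "nat \<Rightarrow> (nat \<Rightarrow> nat) \<Rightarrow> (nat \<Rightarrow> nat) set" where
  "T_set d \<alpha> = {\<beta>\<in>I3 d. hamming d \<alpha> \<beta> = d}"

definition eps_sparse :: "nat \<Rightarrow> real \<Rightarrow> (nat \<Rightarrow> nat) set \<Rightarrow> bool" where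
  "eps_sparse d \<epsilon> S \<longleftrightarrow> S \<subseteq> I3 d \<and>
     (\<forall>\<alpha>\<in>S. \<forall>\<beta>\<in>S. \<alpha> \<noteq> \<beta> \<longrightarrow> real (hamming d \<alpha> \<beta>) \<ge> \<epsilon> * d) \<and>
     (\<forall>\<alpha>\<in>S. \<exists>\<gamma>\<in>I3 d. T_set d \<gamma> \<inter> S = {\<alpha>})"

end

theory Submission imports Defs begin

text \<open>The matrix is \<open>J/3 - (1/3) \<Sum>\<^sub>a D\<^sub>a - \<Sum>\<^sub>a e\<^sub>a G\<^sub>a\<close>, summed over \<open>a \<in> S\<close>. Both \<open>D\<^sub>a\<close>
  and \<open>G\<^sub>a\<close> are tensor products of zero-sum vectors, so all their line sums vanish.
  \<open>D\<^sub>a\<close> (factors \<open>1\<close> at \<open>a i\<close>, \<open>-1/2\<close> elsewhere) is \<open>1\<close> at \<open>a\<close> and has absolute value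
  \<open>2 ^ -\<rho>(a,b)\<close> at \<open>b\<close>. \<open>G\<^sub>a\<close> (factors \<open>0\<close> at \<open>\<gamma>\<^sub>a i\<close>, \<open>1\<close> at \<open>a i\<close>, \<open>-1\<close> elsewhere) is \<open>1\<close>
  at \<open>a\<close> and vanishes on \<open>S - {a}\<close>, because \<open>T \<gamma>\<^sub>a \<inter> S = {a}\<close>; the coefficient \<open>e\<^sub>a\<close>
  cancels the values of the other \<open>D\<^sub>a\<^sub>'\<close> at \<open>a\<close>, so the matrix vanishes on \<open>S\<close>.
  Off \<open>S\<close>, the point of \<open>S\<close> nearest to \<open>b\<close> contributes at most \<open>1/2\<close>, and since \<open>S\<close> is
  \<open>\<epsilon>d\<close>-separated all other terms together contribute at most \<open>\<eta> + \<eta>\<^sup>2\<close>, where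
  \<open>\<eta> = |S| 2 ^ (-\<epsilon>d/2) \<le> 2 ^ (-\<epsilon>d/4)\<close> is tiny; so the entry stays positive.\<close>

lemma finite_I3: "finite (I3 d)"
proof -
  have "I3 d \<subseteq> {f. \<forall>x. (x \<in> {..<d} \<longrightarrow> f x \<in> {1,2,3}) \<and> (x \<notin> {..<d} \<longrightarrow> f x = 0)}"
    by (auto simp: I3_def)
  moreover have "finite {f. \<forall>x. (x \<in> {..<d} \<longrightarrow> f x \<in> {1,2,3::nat}) \<and> (x \<notin> {..<d} \<longrightarrow> f x = 0)}"
    by (rule finite_set_of_finite_funs) auto
  ultimately show ?thesis by (rule finite_subset)
qed

lemma hamming_commute: "hamming d a b = hamming d b a"
  unfolding hamming_def by metis

lemma hamming_triangle: "hamming d a c \<le> hamming d a b + hamming d b c"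
proof -
  have "hamming d a c \<le> card ({i. i < d \<and> a i \<noteq> b i} \<union> {i. i < d \<and> b i \<noteq> c i})"
    unfolding hamming_def by (intro card_mono) auto
  also have "\<dots> \<le> hamming d a b + hamming d b c"
    unfolding hamming_def by (rule card_Un_le)
  finally show ?thesis .
qed

lemma hamming_ge_1:
  assumes "a \<in> I3 d" "b \<in> I3 d" "a \<noteq> b"
  shows "hamming d a b \<ge> 1"
proof -
  obtain i where "a i \<noteq> b i" using assms(3) by auto
  moreover from this have "i < d" using assms(1,2) by (auto simp: I3_def) (metis not_le)
  ultimately have "{i. i < d \<and> a i \<noteq> b i} \<noteq> {}" by auto
  thus ?thesis unfolding hamming_def by (simp add: Suc_le_eq card_gt_0_iff)
qed

lemma hamming_eq_dim_iff: "hamming d a c = d \<longleftrightarrow> (\<forall>i<d. a i \<noteq> c i)"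
proof
  assume "hamming d a c = d"
  hence "{i. i < d \<and> a i \<noteq> c i} = {..<d}"
    unfolding hamming_def by (intro card_subset_eq) auto
  thus "\<forall>i<d. a i \<noteq> c i" by auto
next
  assume "\<forall>i<d. a i \<noteq> c i"
  hence "{i. i < d \<and> a i \<noteq> c i} = {..<d}" by auto
  thus "hamming d a c = d" by (simp add: hamming_def)
qed

lemma eps_sparse_gates:
  assumes "eps_sparse d \<epsilon> S"
  obtains g where
    "\<And>a. a \<in> S \<Longrightarrow> g a \<in> I3 d"
    "\<And>a. a \<in> S \<Longrightarrow> \<forall>i<d. a i \<noteq> g a i"
    "\<And>a b. a \<in> S \<Longrightarrow> b \<in> S \<Longrightarrow> b \<noteq> a \<Longrightarrow> \<exists>i<d. b i = g a i"
proof -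
  have "\<forall>a\<in>S. \<exists>c. c \<in> I3 d \<and> T_set d c \<inter> S = {a}"
    using assms unfolding eps_sparse_def by blast
  then obtain g where g: "\<And>a. a \<in> S \<Longrightarrow> g a \<in> I3 d \<and> T_set d (g a) \<inter> S = {a}"
    by metis
  have sub: "S \<subseteq> I3 d" using assms by (simp add: eps_sparse_def)
  show ?thesis
  proof
    fix a assume "a \<in> S"
    then show "g a \<in> I3 d" using g by blast
  next
    fix a assume "a \<in> S"
    hence "hamming d (g a) a = d" using g by (auto simp: T_set_def)
    thus "\<forall>i<d. a i \<noteq> g a i" by (auto simp: hamming_eq_dim_iff)
  next
    fix a b assume ab: "a \<in> S" "b \<in> S" "b \<noteq> a"
    show "\<exists>i<d. b i = g a i"
    proof (rule ccontr)
      assume "\<not> (\<exists>i<d. b i = g a i)"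
      hence "b \<in> T_set d (g a)"
        using sub ab by (auto simp: T_set_def hamming_eq_dim_iff)
      thus False using g[OF ab(1)] ab by auto
    qed
  qed
qed

lemma prod_fun_upd:
  fixes g :: "nat \<Rightarrow> nat \<Rightarrow> real"
  assumes "j < d"
  shows "(\<Prod>i<d. g i ((b(j:=k)) i)) = g j k * (\<Prod>i\<in>{..<d}-{j}. g i (b i))"
proof -
  have "(\<Prod>i<d. g i ((b(j:=k)) i)) = g j k * (\<Prod>i\<in>{..<d}-{j}. g i ((b(j:=k)) i))"
    using assms by (subst prod.remove[of _ j]) auto
  also have "(\<Prod>i\<in>{..<d}-{j}. g i ((b(j:=k)) i)) = (\<Prod>i\<in>{..<d}-{j}. g i (b i))"
    by (rule prod.cong) auto
  finally show ?thesis .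
qed

lemma tensor_line_sum_eq_0:
  fixes g :: "nat \<Rightarrow> nat \<Rightarrow> real"
  assumes "j < d" "(\<Sum>k\<in>{1,2,3::nat}. g j k) = 0"
  shows "(\<Sum>k\<in>{1,2,3::nat}. \<Prod>i<d. g i ((b(j:=k)) i)) = 0"
proof -
  have "(\<Sum>k\<in>{1,2,3::nat}. \<Prod>i<d. g i ((b(j:=k)) i))
      = (\<Sum>k\<in>{1,2,3::nat}. g j k) * (\<Prod>i\<in>{..<d}-{j}. g i (b i))"
    by (simp only: prod_fun_upd[OF assms(1)] sum_distrib_right)
  thus ?thesis using assms(2) by simp
qed

definition peak :: "nat \<Rightarrow> (nat \<Rightarrow> nat) \<Rightarrow> (nat \<Rightarrow> nat) \<Rightarrow> real" where
  "peak d a b = (\<Prod>i<d. if b i = a i then 1 else -1/2)"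

definition gate :: "nat \<Rightarrow> (nat \<Rightarrow> nat) \<Rightarrow> (nat \<Rightarrow> nat) \<Rightarrow> (nat \<Rightarrow> nat) \<Rightarrow> real" where
  "gate d a c b = (\<Prod>i<d. if b i = c i then 0 else if b i = a i then 1 else -1)"

lemma peak_line_sum:
  assumes "a \<in> I3 d" "j < d"
  shows "(\<Sum>k\<in>{1,2,3::nat}. peak d a (b(j:=k))) = 0"
proof -
  have "a j \<in> {1,2,3}" using assms by (auto simp: I3_def)
  then show ?thesis
    unfolding peak_def using assms(2) by (intro tensor_line_sum_eq_0) auto
qed

lemma gate_line_sum:
  assumes "a \<in> I3 d" "c \<in> I3 d" "\<forall>i<d. a i \<noteq> c i" "j < d"
  shows "(\<Sum>k\<in>{1,2,3::nat}. gate d a c (b(j:=k))) = 0"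
proof -
  have "a j \<in> {1,2,3}" "c j \<in> {1,2,3}" "a j \<noteq> c j" using assms by (auto simp: I3_def)
  then show ?thesis
    unfolding gate_def using assms(4) by (intro tensor_line_sum_eq_0) auto
qed

lemma peak_self: "peak d a a = 1"
  by (simp add: peak_def)

lemma abs_peak: "\<bar>peak d a b\<bar> = (1/2) ^ hamming d a b"
proof -
  have "\<bar>peak d a b\<bar> = (\<Prod>i<d. if b i = a i then 1 else 1/2)"
    unfolding peak_def abs_prod by (rule prod.cong) auto
  also have "\<dots> = (1/2) ^ card ({..<d} \<inter> - {i. b i = a i})"
    by (simp add: prod.If_cases)
  also have "{..<d} \<inter> - {i. b i = a i} = {i. i < d \<and> a i \<noteq> b i}" by auto
  finally show ?thesis by (simp add: hamming_def)
qed

lemma gate_self: "\<forall>i<d. a i \<noteq> c i \<Longrightarrow> gate d a c a = 1"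
  by (simp add: gate_def)

lemma gate_eq_0: "i < d \<Longrightarrow> b i = c i \<Longrightarrow> gate d a c b = 0"
  unfolding gate_def by (intro prod_zero bexI[of _ i]) auto

lemma abs_gate_le_1: "\<bar>gate d a c b\<bar> \<le> 1"
  unfolding gate_def abs_prod by (rule prod_le_1) auto

lemma half_power_le_powr: "x \<le> real n \<Longrightarrow> (1/2::real) ^ n \<le> 2 powr (-x)"
proof -
  assume "x \<le> real n"
  have "(1/2::real) ^ n = 2 powr (- real n)"
    by (simp add: powr_minus powr_realpow power_one_over inverse_eq_divide)
  also have "\<dots> \<le> 2 powr (-x)" using \<open>x \<le> real n\<close> by (intro powr_mono) auto
  finally show ?thesis .
qed

definition separated :: "nat \<Rightarrow> real \<Rightarrow> (nat \<Rightarrow> nat) set \<Rightarrow> bool" where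
  "separated d \<delta> S \<longleftrightarrow> (\<forall>a\<in>S. \<forall>b\<in>S. a \<noteq> b \<longrightarrow> \<delta> \<le> real (hamming d a b))"

text \<open>A point nearest to \<open>b\<close> contributes at most \<open>1/2\<close>; every other point of \<open>S\<close> is at
  distance at least \<open>\<delta>/2\<close> from \<open>b\<close>, being \<open>\<delta>\<close>-far from the nearest one.\<close>

lemma sum_half_power_hamming_outside:
  assumes "finite S" "S \<subseteq> I3 d" "separated d \<delta> S" "b \<in> I3 d" "b \<notin> S"
  shows "(\<Sum>a\<in>S. (1/2::real) ^ hamming d a b) \<le> 1/2 + card S * 2 powr (-\<delta>/2)"
proof (cases "S = {}")
  case False
  obtain a0 where a0: "a0 \<in> S" and nearest: "\<And>a. a \<in> S \<Longrightarrow> hamming d a0 b \<le> hamming d a b"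
    using ex_is_arg_min_if_finite[OF \<open>finite S\<close> False, of "\<lambda>a. hamming d a b"]
    by (auto simp: is_arg_min_linorder)
  have "(\<Sum>a\<in>S. (1/2::real) ^ hamming d a b)
      = (1/2) ^ hamming d a0 b + (\<Sum>a\<in>S-{a0}. (1/2::real) ^ hamming d a b)"
    using assms(1) a0 by (simp add: sum.remove)
  also have "(1/2::real) ^ hamming d a0 b \<le> (1/2) ^ 1"
    using hamming_ge_1[of a0 d b] a0 assms(2,4,5) by (intro power_decreasing) auto
  also have "(\<Sum>a\<in>S-{a0}. (1/2::real) ^ hamming d a b) \<le> (\<Sum>a\<in>S-{a0}. 2 powr (-\<delta>/2))"
  proof (rule sum_mono)
    fix a assume a: "a \<in> S - {a0}"
    have "hamming d a a0 \<le> hamming d a b + hamming d b a0" by (rule hamming_triangle)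
    also have "hamming d b a0 \<le> hamming d a b"
      using nearest[of a] a hamming_commute[of d b a0] by auto
    finally have "real (hamming d a a0) \<le> 2 * real (hamming d a b)" by linarith
    moreover have "\<delta> \<le> hamming d a a0" using assms(3) a a0 by (auto simp: separated_def)
    ultimately have "\<delta>/2 \<le> real (hamming d a b)" by linarith
    then show "(1/2::real) ^ hamming d a b \<le> 2 powr (-\<delta>/2)"
      using half_power_le_powr by simp
  qed
  also have "(\<Sum>a\<in>S-{a0}. 2 powr (-\<delta>/2)) \<le> card S * 2 powr (-\<delta>/2)"
    using card_mono[OF assms(1), of "S-{a0}"] by simp
  finally show ?thesis by simp
qed simp

lemma sum_half_power_hamming_inside:
  assumes "finite S" "separated d \<delta> S" "b \<in> S"
  shows "(\<Sum>a\<in>S-{b}. (1/2::real) ^ hamming d a b) \<le> card S * 2 powr (-\<delta>)"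
proof -
  have "(\<Sum>a\<in>S-{b}. (1/2::real) ^ hamming d a b) \<le> (\<Sum>a\<in>S-{b}. 2 powr (-\<delta>))"
    using assms(2,3) by (intro sum_mono half_power_le_powr) (auto simp: separated_def)
  also have "\<dots> \<le> card S * 2 powr (-\<delta>)"
    using card_mono[OF assms(1), of "S-{b}"] by simp
  finally show ?thesis .
qed

definition peak_correction :: "nat \<Rightarrow> (nat \<Rightarrow> nat) set \<Rightarrow> (nat \<Rightarrow> nat) \<Rightarrow> real" where
  "peak_correction d S a = -(1/3) * (\<Sum>a'\<in>S-{a}. peak d a' a)"

definition holey_matrix ::
    "nat \<Rightarrow> (nat \<Rightarrow> nat) set \<Rightarrow> ((nat \<Rightarrow> nat) \<Rightarrow> nat \<Rightarrow> nat) \<Rightarrow> (nat \<Rightarrow> nat) \<Rightarrow> real" where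
  "holey_matrix d S g b = 1/3 - (1/3) * (\<Sum>a\<in>S. peak d a b)
     - (\<Sum>a\<in>S. peak_correction d S a * gate d a (g a) b)"

lemma holey_matrix_line_sum:
  assumes "S \<subseteq> I3 d" "\<And>a. a \<in> S \<Longrightarrow> g a \<in> I3 d"
    and "\<And>a. a \<in> S \<Longrightarrow> \<forall>i<d. a i \<noteq> g a i" "j < d"
  shows "(\<Sum>k\<in>{1,2,3::nat}. holey_matrix d S g (b(j:=k))) = 1"
proof -
  have "(\<Sum>k\<in>{1,2,3::nat}. holey_matrix d S g (b(j:=k))) = (\<Sum>k\<in>{1,2,3::nat}. 1/3)
       - (1/3) * (\<Sum>a\<in>S. \<Sum>k\<in>{1,2,3::nat}. peak d a (b(j:=k)))
       - (\<Sum>a\<in>S. peak_correction d S a * (\<Sum>k\<in>{1,2,3::nat}. gate d a (g a) (b(j:=k))))"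
    unfolding holey_matrix_def sum_subtractf sum_distrib_left
    by (subst (1 2) sum.swap) simp
  also have "(\<Sum>a\<in>S. \<Sum>k\<in>{1,2,3::nat}. peak d a (b(j:=k))) = 0"
    using peak_line_sum assms by (intro sum.neutral) auto
  also have "(\<Sum>a\<in>S. peak_correction d S a * (\<Sum>k\<in>{1,2,3::nat}. gate d a (g a) (b(j:=k)))) = 0"
    using gate_line_sum assms by (intro sum.neutral) auto
  finally have line: "(\<Sum>k\<in>{1,2,3::nat}. holey_matrix d S g (b(j:=k)))
      = (\<Sum>k\<in>{1,2,3::nat}. 1/3) - (1/3) * 0 - 0" .
  show ?thesis by (simp only: line) simp
qed

lemma holey_matrix_eq_0:
  assumes "finite S" "b \<in> S"
    and "\<And>a. a \<in> S \<Longrightarrow> \<forall>i<d. a i \<noteq> g a i"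
    and "\<And>a b. a \<in> S \<Longrightarrow> b \<in> S \<Longrightarrow> b \<noteq> a \<Longrightarrow> \<exists>i<d. b i = g a i"
  shows "holey_matrix d S g b = 0"
proof -
  have "(\<Sum>a\<in>S. peak d a b) = peak d b b + (\<Sum>a\<in>S-{b}. peak d a b)"
    using assms(1,2) by (simp add: sum.remove)
  moreover have "(\<Sum>a\<in>S. peak_correction d S a * gate d a (g a) b)
      = peak_correction d S b * gate d b (g b) b
        + (\<Sum>a\<in>S-{b}. peak_correction d S a * gate d a (g a) b)"
    using assms(1,2) by (simp add: sum.remove)
  moreover have "(\<Sum>a\<in>S-{b}. peak_correction d S a * gate d a (g a) b) = 0"
    using assms(2,4) by (intro sum.neutral) (auto intro: gate_eq_0)
  moreover have "gate d b (g b) b = 1" using assms(2,3) by (intro gate_self) auto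
  ultimately show ?thesis
    by (simp add: holey_matrix_def peak_self peak_correction_def field_simps)
qed

lemma abs_peak_correction_le:
  assumes "finite S" "separated d \<delta> S" "a \<in> S"
  shows "\<bar>peak_correction d S a\<bar> \<le> (1/3) * (card S * 2 powr (-\<delta>))"
proof -
  have "\<bar>\<Sum>a'\<in>S-{a}. peak d a' a\<bar> \<le> (\<Sum>a'\<in>S-{a}. (1/2) ^ hamming d a' a)"
    using sum_abs[where f="\<lambda>a'. peak d a' a"] by (simp add: abs_peak)
  also have "\<dots> \<le> card S * 2 powr (-\<delta>)"
    by (rule sum_half_power_hamming_inside[OF assms])
  finally show ?thesis unfolding peak_correction_def by (simp add: abs_mult)
qed

lemma holey_matrix_pos:
  fixes S :: "(nat \<Rightarrow> nat) set" and \<delta> :: real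
  defines "\<eta> \<equiv> card S * 2 powr (-\<delta>/2)"
  assumes "finite S" "S \<subseteq> I3 d" "separated d \<delta> S" "b \<in> I3 d" "b \<notin> S"
    and "\<eta> + \<eta>\<^sup>2 < 1/2"
  shows "holey_matrix d S g b > 0"
proof -
  have "\<bar>\<Sum>a\<in>S. peak d a b\<bar> \<le> (\<Sum>a\<in>S. (1/2) ^ hamming d a b)"
    using sum_abs[where f="\<lambda>a. peak d a b"] by (simp add: abs_peak)
  also have "\<dots> \<le> 1/2 + \<eta>"
    unfolding \<eta>_def using assms(2-6) by (rule sum_half_power_hamming_outside)
  finally have peaks: "\<bar>\<Sum>a\<in>S. peak d a b\<bar> \<le> 1/2 + \<eta>" .
  have "\<bar>\<Sum>a\<in>S. peak_correction d S a * gate d a (g a) b\<bar>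
      \<le> (\<Sum>a\<in>S. \<bar>peak_correction d S a\<bar> * \<bar>gate d a (g a) b\<bar>)"
    using sum_abs[where f="\<lambda>a. peak_correction d S a * gate d a (g a) b"] by (simp add: abs_mult)
  also have "\<dots> \<le> (\<Sum>a\<in>S. (1/3) * (card S * 2 powr (-\<delta>)))"
  proof (rule sum_mono)
    fix a assume "a \<in> S"
    have "\<bar>peak_correction d S a\<bar> * \<bar>gate d a (g a) b\<bar> \<le> \<bar>peak_correction d S a\<bar>"
      using abs_gate_le_1 by (intro mult_left_le) auto
    also have "\<dots> \<le> (1/3) * (card S * 2 powr (-\<delta>))"
      using abs_peak_correction_le[OF assms(2,4) \<open>a \<in> S\<close>] .
    finally show "\<bar>peak_correction d S a\<bar> * \<bar>gate d a (g a) b\<bar> \<le> (1/3) * (card S * 2 powr (-\<delta>))" .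
  qed
  also have "\<dots> = (1/3) * \<eta>\<^sup>2"
    by (simp add: \<eta>_def power2_eq_square powr_add[symmetric])
  finally have gates: "\<bar>\<Sum>a\<in>S. peak_correction d S a * gate d a (g a) b\<bar> \<le> (1/3) * \<eta>\<^sup>2" .
  show ?thesis
    unfolding holey_matrix_def using peaks gates assms(7) by linarith
qed

lemma holey_matrix_polystochastic:
  fixes S :: "(nat \<Rightarrow> nat) set" and \<delta> :: real
  defines "\<eta> \<equiv> card S * 2 powr (-\<delta>/2)"
  assumes "finite S" "S \<subseteq> I3 d" "separated d \<delta> S" "\<eta> + \<eta>\<^sup>2 < 1/2"
    and "\<And>a. a \<in> S \<Longrightarrow> g a \<in> I3 d"
    and "\<And>a. a \<in> S \<Longrightarrow> \<forall>i<d. a i \<noteq> g a i"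
    and "\<And>a b. a \<in> S \<Longrightarrow> b \<in> S \<Longrightarrow> b \<noteq> a \<Longrightarrow> \<exists>i<d. b i = g a i"
  shows "polystochastic d (holey_matrix d S g)" "supp d (holey_matrix d S g) = I3 d - S"
proof -
  have pos: "\<And>b. b \<in> I3 d \<Longrightarrow> b \<notin> S \<Longrightarrow> holey_matrix d S g b > 0"
    using assms unfolding \<eta>_def by (intro holey_matrix_pos)
  have zero: "\<And>b. b \<in> S \<Longrightarrow> holey_matrix d S g b = 0"
    using assms by (intro holey_matrix_eq_0)
  show "polystochastic d (holey_matrix d S g)"
    unfolding polystochastic_def
  proof (intro conjI ballI allI impI)
    fix b assume "b \<in> I3 d"
    then show "holey_matrix d S g b \<ge> 0"
      using zero pos by (cases "b \<in> S") (auto intro: less_imp_le)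
  qed (rule holey_matrix_line_sum[OF assms(3,6,7)])
  show "supp d (holey_matrix d S g) = I3 d - S"
    unfolding supp_def using zero pos assms(3) by force
qed

lemma small_card_mult_powr:
  fixes n :: nat and \<delta> :: real
  defines "\<eta> \<equiv> n * 2 powr (-\<delta>/2)"
  assumes "14 \<le> \<delta>" "n \<le> 2 powr (\<delta>/4)"
  shows "\<eta> + \<eta>\<^sup>2 < 1/2"
proof -
  have "\<eta> \<le> 2 powr (\<delta>/4) * 2 powr (-\<delta>/2)"
    unfolding \<eta>_def using assms(3) by (intro mult_right_mono) auto
  also have "\<dots> \<le> 2 powr (-7/2)"
    using assms(2) by (simp add: powr_add[symmetric])
  also have "\<dots> < 2 powr (-2)" by (intro powr_less_mono) auto
  also have "\<dots> = 1/4" by (simp add: powr_minus)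
  finally have "\<eta> < 1/4" .
  moreover have "0 \<le> \<eta>" by (simp add: \<eta>_def)
  ultimately have "\<eta>\<^sup>2 < (1/4)\<^sup>2" by (intro power_strict_mono) auto
  with \<open>\<eta> < 1/4\<close> show ?thesis by (simp add: power2_eq_square)
qed

theorem lemma1:
  fixes \<epsilon> :: real and d :: nat and S :: "(nat \<Rightarrow> nat) set"
  assumes "0 < \<epsilon>" and "\<epsilon> < 1"
    and "real d \<ge> 14 / \<epsilon>"
    and "eps_sparse d \<epsilon> S"
    and "real (card S) \<le> 2 powr (\<epsilon> * real d / 4)"
  shows "\<exists>A. polystochastic d A \<and> supp d A = I3 d - S"
proof -
  define \<delta> where "\<delta> = \<epsilon> * real d"
  have "14 \<le> \<delta>" using assms(1,3) unfolding \<delta>_def by (simp add: pos_divide_le_eq mult.commute)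
  moreover have "card S \<le> 2 powr (\<delta>/4)" using assms(5) by (simp add: \<delta>_def)
  ultimately have small: "card S * 2 powr (-\<delta>/2) + (card S * 2 powr (-\<delta>/2))\<^sup>2 < 1/2"
    by (rule small_card_mult_powr)
  have sub: "S \<subseteq> I3 d" and sep: "separated d \<delta> S"
    using assms(4) by (auto simp: eps_sparse_def separated_def \<delta>_def)
  have fin: "finite S" using sub finite_I3 by (rule finite_subset)
  obtain g where g: "\<And>a. a \<in> S \<Longrightarrow> g a \<in> I3 d" "\<And>a. a \<in> S \<Longrightarrow> \<forall>i<d. a i \<noteq> g a i"
    "\<And>a b. a \<in> S \<Longrightarrow> b \<in> S \<Longrightarrow> b \<noteq> a \<Longrightarrow> \<exists>i<d. b i = g a i"
    using eps_sparse_gates[OF assms(4)] by metis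
  show ?thesis
    using holey_matrix_polystochastic[OF fin sub sep small g] by blast
qed

end
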